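(* Let $I\subset\mathbb{R}$ be an open interval, let $\bm{a}:I\to\mathbb{R}^2_1$ be a frontal with Gauss mapping $\bm{\nu}:I\to H^1$ (or $S^1_1$), and let $r:I\to\mathbb{R}^+$ be a smooth positive function. Suppose the pseudo-circle family $C_{(\bm{a}(t),\pm r(t))}$ creates an envelope $f:I\to\mathbb{R}^2_1$, and write $f(t)=\bm{a}(t)+r(t)\tilde{\bm{\nu}}(t)$ with $\tilde{\bm{\nu}}:I\to S^1_1$ (for the family with $+r$) or $\tilde{\bm{\nu}}:I\to H^1$ (for the family with $-r$). Then: (1) If $\epsilon_{\tilde{\bm{\nu}}}\cdot\epsilon_{\bm{\mu}}=1$, then $\tilde{\bm{\nu}}(t)=\cosh\theta(t)\bm{\mu}(t)\pm\sinh\theta(t)\bm{\nu}(t)$ or $\tilde{\bm{\nu}}(t)=-\cosh\theta(t)\bm{\mu}(t)\pm\sinh\theta(t)\bm{\nu}(t)$, where $\theta:I\to\mathbb{R}$ is a function satisfying $\frac{dr}{dt}(t)+\beta(t)\cosh\theta(t)=0$ or $\frac{dr}{dt}(t)-\beta(t)\cosh\theta(t)=0$ for all $t\in I$. (2) If $\epsilon_{\tilde{\bm{\nu}}}\cdot\epsilon_{\bm{\mu}}=-1$, then $\tilde{\bm{\nu}}(t)=\sinh\theta(t)\bm{\mu}(t)\pm\cosh\theta(t)\bm{\nu}(t)$, where $\theta:I\to\mathbb{R}$ is a function satisfying $\frac{dr}{dt}(t)-\beta(t)\sinh\theta(t)=0$ for all $t\in I$.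
   Context: All objects are $C^\infty$. The Minkowski plane $\mathbb{R}^2_1$ is $\mathbb{R}^2$ with $\langle\bm{x},\bm{y}\rangle=-x_1y_1+x_2y_2$; $S^1_1=\{\bm{x}:\langle\bm{x},\bm{x}\rangle=1\}$, $H^1=\{\bm{x}:\langle\bm{x},\bm{x}\rangle=-1\}$. For non-lightlike $\bm{x}$, $\epsilon_{\bm{x}}=1$ if $\bm{x}$ is spacelike ($\langle\bm{x},\bm{x}\rangle>0$) and $-1$ if timelike ($\langle\bm{x},\bm{x}\rangle<0$); for a map into $S^1_1$ or $H^1$ this sign is constant. A smooth $\bm{a}:I\to\mathbb{R}^2_1$ is a spacelike (resp. timelike) frontal if there is smooth $\bm{\nu}:I\to H^1$ (resp. $S^1_1$), the Gauss mapping, with $\langle\frac{d\bm{a}}{dt},\bm{\nu}\rangle=0$. $\bm{\mu}:I\to S^1_1$ (resp. $H^1$) is a smooth unit field with $\langle\bm{\mu},\bm{\nu}\rangle=0$, and $\frac{d\bm{a}}{dt}=\beta\bm{\mu}$ with $\beta(t)=\epsilon_{\bm{\mu}}\langle\bm{\mu}(t),\frac{d\bm{a}}{dt}(t)\rangle$. $C_{(\bm{a}(t),\pm r(t))}=\{\bm{x}:\langle\bm{x}-\bm{a}(t),\bm{x}-\bm{a}(t)\rangle=\pm r(t)^2\}$. An envelope of $C_{(\bm{a}(t),\pm r(t))}$ is a smooth $f:I\to\mathbb{R}^2_1$ with $f(t)\in C_{(\bm{a}(t),\pm r(t))}$ and $\langle\frac{df}{dt}(t),f(t)-\bm{a}(t)\rangle=0$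 for all $t$. *)

theory Defs
  imports "HOL-Analysis.Analysis"
begin

definition mink :: "real \<times> real \<Rightarrow> real \<times> real \<Rightarrow> real" where
  "mink x y = - fst x * fst y + snd x * snd y"

definition S11 :: "(real \<times> real) set" where
  "S11 = {x. mink x x = 1}"

definition H1 :: "(real \<times> real) set" where
  "H1 = {x. mink x x = -1}"

definition eps :: "real \<times> real \<Rightarrow> real" where
  "eps x = (if mink x x > 0 then 1 else -1)"

definition smooth_on :: "real set \<Rightarrow> (real \<Rightarrow> 'a::real_normed_vector) \<Rightarrow> bool" where
  "smooth_on I g \<longleftrightarrow> (\<exists>D :: nat \<Rightarrow> real \<Rightarrow> 'a. (\<forall>t\<in>I. D 0 t = g t) \<and>
      (\<forall>n. \<forall>t\<in>I. (D n has_vector_derivative D (Suc n) t) (at t)))"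

definition open_interval :: "real set \<Rightarrow> bool" where
  "open_interval I \<longleftrightarrow> is_interval I \<and> open I \<and> I \<noteq> {}"

definition spacelike_frontal_frame ::
  "real set \<Rightarrow> (real \<Rightarrow> real \<times> real) \<Rightarrow> (real \<Rightarrow> real \<times> real) \<Rightarrow> (real \<Rightarrow> real \<times> real) \<Rightarrow> bool" where
  "spacelike_frontal_frame I a \<nu> \<mu> \<longleftrightarrow> smooth_on I a \<and> smooth_on I \<nu> \<and> smooth_on I \<mu> \<and>
     (\<forall>t\<in>I. \<nu> t \<in> H1 \<and> \<mu> t \<in> S11 \<and> mink (\<mu> t) (\<nu> t) = 0 \<and>
        mink (vector_derivative a (at t)) (\<nu> t) = 0)"

definition timelike_frontal_frame ::
  "real set \<Rightarrow> (real \<Rightarrow> real \<times> real) \<Rightarrow> (real \<Rightarrow> real \<times> real) \<Rightarrow> (real \<Rightarrow> real \<times> real) \<Rightarrow> bool" where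
  "timelike_frontal_frame I a \<nu> \<mu> \<longleftrightarrow> smooth_on I a \<and> smooth_on I \<nu> \<and> smooth_on I \<mu> \<and>
     (\<forall>t\<in>I. \<nu> t \<in> S11 \<and> \<mu> t \<in> H1 \<and> mink (\<mu> t) (\<nu> t) = 0 \<and>
        mink (vector_derivative a (at t)) (\<nu> t) = 0)"

text \<open>beta(t) = eps_mu <mu(t), a'(t)>, so that a' = beta mu.\<close>
definition beta :: "(real \<Rightarrow> real \<times> real) \<Rightarrow> (real \<Rightarrow> real \<times> real) \<Rightarrow> real \<Rightarrow> real" where
  "beta a \<mu> t = eps (\<mu> t) * mink (\<mu> t) (vector_derivative a (at t))"

text \<open>Pseudo-circle C_(c, +rho) (sg = 1) or C_(c, -rho) (sg = -1):
  <x-c,x-c> = sg * rho^2.\<close>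
definition pcircle :: "real \<times> real \<Rightarrow> real \<Rightarrow> real \<Rightarrow> (real \<times> real) set" where
  "pcircle c sg \<rho> = {x. mink (x - c) (x - c) = sg * \<rho>\<^sup>2}"

definition is_envelope ::
  "real set \<Rightarrow> (real \<Rightarrow> real \<times> real) \<Rightarrow> real \<Rightarrow> (real \<Rightarrow> real) \<Rightarrow> (real \<Rightarrow> real \<times> real) \<Rightarrow> bool" where
  "is_envelope I a sg r f \<longleftrightarrow> smooth_on I f \<and>
     (\<forall>t\<in>I. f t \<in> pcircle (a t) sg (r t) \<and> mink (vector_derivative f (at t)) (f t - a t) = 0)"

end

theory Submission
  imports Defs
begin

text \<open>Differentiating \<open>\<langle>f - a, f - a\<rangle> = \<plusminus>r\<^sup>2\<close> and using the envelope condition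
  \<open>\<langle>f', f - a\<rangle> = 0\<close> gives \<open>\<langle>a', \<nu>t\<rangle> = -\<epsilon>\<^sub>\<nu>\<^sub>t r'\<close>. Since \<open>a' = \<beta> \<mu>\<close>, only the
  \<open>\<mu>\<close>-coordinate \<open>x\<close> of \<open>\<nu>t = x \<mu> + y \<nu>\<close> enters, and \<open>\<epsilon>\<^sub>\<mu> \<beta> x = -\<epsilon>\<^sub>\<nu>\<^sub>t r'\<close>.
  The normalisation \<open>\<langle>\<nu>t, \<nu>t\<rangle> = \<epsilon>\<^sub>\<nu>\<^sub>t\<close> puts \<open>(x, y)\<close> on the hyperbola \<open>x\<^sup>2 - y\<^sup>2 = 1\<close>
  when the causal characters of \<open>\<nu>t\<close> and \<open>\<mu>\<close> agree and on \<open>y\<^sup>2 - x\<^sup>2 = 1\<close> otherwise;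
  \<open>\<theta>\<close> is the \<open>arsinh\<close> of the coordinate that may vanish. In case (1) \<open>x\<close> never vanishes and
  is continuous, so on the connected set \<open>I\<close> it stays on one branch of the hyperbola.\<close>

lemma mink_eq_inner: "mink x y = inner (- fst x, snd x) y"
  by (simp add: mink_def inner_prod_def)

lemma bounded_bilinear_mink: "bounded_bilinear mink"
proof -
  have "bounded_linear (\<lambda>x :: real \<times> real. (- fst x, snd x))"
    by (intro bounded_linear_Pair bounded_linear_minus bounded_linear_fst bounded_linear_snd bounded_linear_ident)
  then show ?thesis
    using bounded_bilinear.comp[OF bounded_bilinear_inner _ bounded_linear_ident]
    by (simp add: mink_eq_inner[abs_def])
qed

interpretation mink: bounded_bilinear mink
  by (rule bounded_bilinear_mink)

lemma mink_commute: "mink x y = mink y x"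
  by (simp add: mink_def)

lemma mink_gram_det:
  "mink x x * mink y y - (mink x y)\<^sup>2 = - (fst x * snd y - snd x * fst y)\<^sup>2"
  by (simp add: mink_def power2_eq_square algebra_simps)

definition pseudo_orthonormal :: "real \<Rightarrow> real \<times> real \<Rightarrow> real \<times> real \<Rightarrow> bool" where
  "pseudo_orthonormal e m n \<longleftrightarrow>
     (e = 1 \<or> e = -1) \<and> mink m m = e \<and> mink n n = - e \<and> mink m n = 0"

lemma pseudo_orthonormal_decomp:
  assumes "pseudo_orthonormal e m n"
  shows "v = (e * mink v m) *\<^sub>R m - (e * mink v n) *\<^sub>R n"
proof -
  define w where "w = v - ((e * mink v m) *\<^sub>R m - (e * mink v n) *\<^sub>R n)"
  have ee: "e * e = 1" and mm: "mink m m = e" and nn: "mink n n = - e" and mn: "mink m n = 0"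
    using assms unfolding pseudo_orthonormal_def by auto
  have wm: "mink w m = 0" and wn: "mink w n = 0"
    using ee mm nn mn by (simp_all add: w_def mink.diff_left mink.scaleR_left mink_commute[of n m])
  txt \<open>By the Gram identity \<open>{m, n}\<close> is a basis, and \<open>w\<close> is orthogonal to both.\<close>
  have "(fst m * snd n - snd m * fst n)\<^sup>2 = 1"
    using mink_gram_det[of m n] ee mm nn mn by simp
  then have det: "fst m * snd n - snd m * fst n \<noteq> 0" by auto
  have "fst w * (fst m * snd n - snd m * fst n) = 0" "snd w * (fst m * snd n - snd m * fst n) = 0"
    using wm wn unfolding mink_def by algebra+
  then have "w = 0" using det by (simp add: prod_eq_iff)
  then show ?thesis by (simp add: w_def)
qed

lemma pseudo_orthonormal_mink_self:
  assumes "pseudo_orthonormal e m n"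
  shows "mink (x *\<^sub>R m + y *\<^sub>R n) (x *\<^sub>R m + y *\<^sub>R n) = e * (x\<^sup>2 - y\<^sup>2)"
  using assms unfolding pseudo_orthonormal_def
  by (simp add: mink.add_left mink.add_right mink.scaleR_left mink.scaleR_right mink_commute[of n m]
      power2_eq_square algebra_simps)

lemma pseudo_orthonormal_eps: "pseudo_orthonormal e m n \<Longrightarrow> eps m = e"
  by (auto simp: pseudo_orthonormal_def eps_def)

lemma pseudo_orthonormal_parallel_first:
  assumes "pseudo_orthonormal e m n" "mink w n = 0"
  shows "w = (eps m * mink m w) *\<^sub>R m"
  using pseudo_orthonormal_decomp[OF assms(1), of w] assms
  by (simp add: pseudo_orthonormal_eps mink_commute[of w m])

lemma pseudo_orthonormal_coords:
  fixes v :: "real \<times> real"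
  assumes "pseudo_orthonormal e m n"
  defines "x \<equiv> e * mink v m" and "y \<equiv> - e * mink v n"
  shows "v = x *\<^sub>R m + y *\<^sub>R n" and "x\<^sup>2 - y\<^sup>2 = e * mink v v" and "mink m v = e * x"
proof -
  have ee: "e * e = 1" using assms(1) unfolding pseudo_orthonormal_def by auto
  show v: "v = x *\<^sub>R m + y *\<^sub>R n"
    using pseudo_orthonormal_decomp[OF assms(1), of v] by (simp add: x_def y_def)
  have "mink v v = e * (x\<^sup>2 - y\<^sup>2)"
    by (subst (1 2) v) (rule pseudo_orthonormal_mink_self[OF assms(1)])
  then show "x\<^sup>2 - y\<^sup>2 = e * mink v v"
    by (simp add: ee flip: mult.assoc)
  show "mink m v = e * x"
    by (simp add: x_def ee mink_commute flip: mult.assoc)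
qed

lemma smooth_on_differentiable_at:
  assumes "smooth_on I g" "open I" "t \<in> I"
  shows "g differentiable at t"
proof -
  obtain D where D0: "\<forall>t\<in>I. D 0 t = g t"
    and D: "\<And>n t. t \<in> I \<Longrightarrow> (D n has_vector_derivative D (Suc n) t) (at t)"
    using assms(1) unfolding smooth_on_def by blast
  have "(g has_vector_derivative D 1 t) (at t)"
    using has_vector_derivative_transform_within_open[OF D[OF assms(3)] assms(2,3)] D0 by simp
  then show ?thesis
    unfolding vector_derivative_works[symmetric] by (rule differentiableI_vector)
qed

lemma smooth_on_imp_continuous_on: "smooth_on I g \<Longrightarrow> open I \<Longrightarrow> continuous_on I g"
  by (meson continuous_at_imp_continuous_on differentiable_imp_continuous_within smooth_on_differentiable_at)

lemma envelope_center_velocity: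
  assumes env: "is_envelope I a s r f" and I: "open I" "t \<in> I"
    and a': "(a has_vector_derivative a') (at t)" and r': "(r has_real_derivative r') (at t)"
  shows "mink a' (f t - a t) = - s * r t * r'"
proof -
  define f' where "f' = vector_derivative f (at t)"
  have "f differentiable at t"
    using env I smooth_on_differentiable_at unfolding is_envelope_def by blast
  then have "((\<lambda>u. f u - a u) has_vector_derivative f' - a') (at t)"
    unfolding f'_def by (intro has_vector_derivative_diff a') (simp add: vector_derivative_works)
  from mink.has_vector_derivative[OF this this]
  have "((\<lambda>u. mink (f u - a u) (f u - a u) - s * (r u)\<^sup>2) has_real_derivative
          2 * mink (f' - a') (f t - a t) - s * (2 * r t * r')) (at t)"
    unfolding has_real_derivative_iff_has_vector_derivative[symmetric]
    by (auto intro!: derivative_eq_intros r' simp: mink_commute[of "f t - a t"])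
  moreover have "((\<lambda>u. mink (f u - a u) (f u - a u) - s * (r u)\<^sup>2) has_real_derivative 0) (at t)"
    using env unfolding is_envelope_def pcircle_def
    by (intro has_field_derivative_transform_within_open[OF DERIV_const I]) auto
  ultimately have "mink (f' - a') (f t - a t) = s * r t * r'"
    by (auto dest: DERIV_unique)
  moreover have "mink f' (f t - a t) = 0"
    using env I unfolding is_envelope_def f'_def by blast
  ultimately show ?thesis by (simp add: mink.diff_left)
qed

lemma continuous_on_sign_constant:
  fixes g :: "'a::topological_space \<Rightarrow> real"
  assumes "connected S" "continuous_on S g" "\<forall>t\<in>S. g t \<noteq> 0"
  shows "(\<forall>t\<in>S. g t > 0) \<or> (\<forall>t\<in>S. g t < 0)"
proof (rule ccontr)
  assume "\<not> ?thesis"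
  then obtain t1 t2 where "t1 \<in> S" "g t1 \<le> 0" "t2 \<in> S" "0 \<le> g t2"
    by (meson not_less)
  then obtain z where "z \<in> g ` S" "z = 0"
    using connected_ivt_component[of "g ` S" "g t1" "g t2" 1 0]
      connected_continuous_image[OF assms(2,1)] by auto
  then show False using assms(3) by auto
qed

lemma frontal_frame_pseudo_orthonormal:
  assumes "spacelike_frontal_frame I a \<nu> \<mu> \<or> timelike_frontal_frame I a \<nu> \<mu>"
  obtains e where "e = 1 \<or> e = -1" "\<forall>t\<in>I. pseudo_orthonormal e (\<mu> t) (\<nu> t)"
  using assms that[of 1] that[of "-1"]
  unfolding spacelike_frontal_frame_def timelike_frontal_frame_def pseudo_orthonormal_def S11_def H1_def
  by (auto simp: mink_commute)

lemma frontal_frame_velocity: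
  assumes "spacelike_frontal_frame I a \<nu> \<mu> \<or> timelike_frontal_frame I a \<nu> \<mu>" "t \<in> I"
  shows "vector_derivative a (at t) = beta a \<mu> t *\<^sub>R \<mu> t"
proof -
  obtain e where "pseudo_orthonormal e (\<mu> t) (\<nu> t)"
    using frontal_frame_pseudo_orthonormal[OF assms(1)] assms(2) by blast
  moreover have "mink (vector_derivative a (at t)) (\<nu> t) = 0"
    using assms unfolding spacelike_frontal_frame_def timelike_frontal_frame_def by auto
  ultimately show ?thesis
    unfolding beta_def by (rule pseudo_orthonormal_parallel_first)
qed

lemma cosh_arsinh_eq_abs:
  fixes x y :: real
  assumes "x\<^sup>2 - y\<^sup>2 = 1"
  shows "cosh (arsinh y) = \<bar>x\<bar>"
proof -
  have "y\<^sup>2 + 1 = x\<^sup>2" using assms by simp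
  then show ?thesis by (simp add: cosh_arsinh_real)
qed

lemma hyperbolic_angle_same_causal_character:
  fixes v \<mu> \<nu> :: "real \<Rightarrow> real \<times> real"
  assumes I: "connected I" and cont: "continuous_on I v" "continuous_on I \<mu>"
    and frame: "\<forall>t\<in>I. pseudo_orthonormal e (\<mu> t) (\<nu> t)"
    and unit: "\<forall>t\<in>I. mink (v t) (v t) = e"
    and radius: "\<forall>t\<in>I. b t * mink (\<mu> t) (v t) = - e * r' t"
  shows "\<exists>\<theta>. (\<forall>t\<in>I. v t = cosh (\<theta> t) *\<^sub>R \<mu> t + sinh (\<theta> t) *\<^sub>R \<nu> t \<and> r' t + b t * cosh (\<theta> t) = 0) \<or>
             (\<forall>t\<in>I. v t = - cosh (\<theta> t) *\<^sub>R \<mu> t + sinh (\<theta> t) *\<^sub>R \<nu> t \<and> r' t - b t * cosh (\<theta> t) = 0)"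
proof -
  define x where "x t = e * mink (v t) (\<mu> t)" for t
  define \<theta> where "\<theta> t = arsinh (- e * mink (v t) (\<nu> t))" for t
  have decomp: "v t = x t *\<^sub>R \<mu> t + sinh (\<theta> t) *\<^sub>R \<nu> t"
    and cosh: "cosh (\<theta> t) = \<bar>x t\<bar>"
    and rad: "r' t + b t * x t = 0" if t: "t \<in> I" for t
  proof -
    have ee: "e * e = 1" using frame t unfolding pseudo_orthonormal_def by auto
    note coords = pseudo_orthonormal_coords[OF bspec[OF frame t], of "v t", folded x_def]
    show "v t = x t *\<^sub>R \<mu> t + sinh (\<theta> t) *\<^sub>R \<nu> t"
      using coords(1) by (simp add: \<theta>_def)
    show "cosh (\<theta> t) = \<bar>x t\<bar>"
      unfolding \<theta>_def using coords(2) unit t ee by (intro cosh_arsinh_eq_abs) simp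
    have "b t * (e * x t) = - e * r' t" using radius t coords(3) by auto
    then have "e * (r' t + b t * x t) = 0" by (simp add: algebra_simps)
    then show "r' t + b t * x t = 0" using ee by auto
  qed
  have "continuous_on I x"
    unfolding x_def by (intro continuous_intros mink.continuous_on cont)
  moreover have "\<forall>t\<in>I. x t \<noteq> 0"
    using cosh by (metis abs_zero cosh_real_ge_1 not_one_le_zero)
  ultimately have "(\<forall>t\<in>I. x t > 0) \<or> (\<forall>t\<in>I. x t < 0)"
    using continuous_on_sign_constant[OF I] by blast
  then show ?thesis
  proof
    assume "\<forall>t\<in>I. x t > 0"
    then have "\<forall>t\<in>I. v t = cosh (\<theta> t) *\<^sub>R \<mu> t + sinh (\<theta> t) *\<^sub>R \<nu> t \<and>
                   r' t + b t * cosh (\<theta> t) = 0"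
      using decomp cosh rad by auto
    then show ?thesis by blast
  next
    assume "\<forall>t\<in>I. x t < 0"
    then have "\<forall>t\<in>I. v t = - cosh (\<theta> t) *\<^sub>R \<mu> t + sinh (\<theta> t) *\<^sub>R \<nu> t \<and>
                   r' t - b t * cosh (\<theta> t) = 0"
      using decomp cosh rad by (auto simp: abs_if)
    then show ?thesis by blast
  qed
qed

lemma hyperbolic_angle_opposite_causal_character:
  fixes v \<mu> \<nu> :: "real \<Rightarrow> real \<times> real"
  assumes frame: "\<forall>t\<in>I. pseudo_orthonormal e (\<mu> t) (\<nu> t)"
    and unit: "\<forall>t\<in>I. mink (v t) (v t) = - e"
    and radius: "\<forall>t\<in>I. b t * mink (\<mu> t) (v t) = e * r' t"
  shows "\<exists>\<theta>. \<forall>t\<in>I. (v t = sinh (\<theta> t) *\<^sub>R \<mu> t + cosh (\<theta> t) *\<^sub>R \<nu> t \<or>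
                    v t = sinh (\<theta> t) *\<^sub>R \<mu> t - cosh (\<theta> t) *\<^sub>R \<nu> t) \<and>
                   r' t - b t * sinh (\<theta> t) = 0"
proof -
  define \<theta> where "\<theta> t = arsinh (e * mink (v t) (\<mu> t))" for t
  show ?thesis
  proof (intro exI[of _ \<theta>] ballI conjI)
    fix t assume t: "t \<in> I"
    define x where "x = e * mink (v t) (\<mu> t)"
    define y where "y = - e * mink (v t) (\<nu> t)"
    have ee: "e * e = 1" using frame t unfolding pseudo_orthonormal_def by auto
    have sinh: "sinh (\<theta> t) = x" by (simp add: \<theta>_def x_def)
    note coords = pseudo_orthonormal_coords[OF bspec[OF frame t], of "v t", folded x_def y_def]
    have "cosh (\<theta> t) = \<bar>y\<bar>"
      unfolding \<theta>_def x_def[symmetric] using coords(2) unit t ee by (intro cosh_arsinh_eq_abs) simp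
    then show "v t = sinh (\<theta> t) *\<^sub>R \<mu> t + cosh (\<theta> t) *\<^sub>R \<nu> t \<or>
               v t = sinh (\<theta> t) *\<^sub>R \<mu> t - cosh (\<theta> t) *\<^sub>R \<nu> t"
      using coords(1) sinh by (simp add: abs_if)
    have "e * (b t * sinh (\<theta> t)) = e * r' t"
      using radius t coords(3) sinh by (metis mult.left_commute)
    then show "r' t - b t * sinh (\<theta> t) = 0" using ee by auto
  qed
qed

lemma frontal_envelope_radius:
  assumes frontal: "spacelike_frontal_frame I a \<nu> \<mu> \<or> timelike_frontal_frame I a \<nu> \<mu>"
    and env: "is_envelope I a s r f" and I: "open I" "t \<in> I"
    and r: "smooth_on I r" "r t > 0" and f: "f t = a t + r t *\<^sub>R v t"
  shows "beta a \<mu> t * mink (\<mu> t) (v t) = - s * deriv r t"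
proof -
  have "a differentiable at t"
    using frontal I smooth_on_differentiable_at
    unfolding spacelike_frontal_frame_def timelike_frontal_frame_def by blast
  moreover have "(r has_real_derivative deriv r t) (at t)"
    using smooth_on_differentiable_at[OF r(1) I] DERIV_deriv_iff_real_differentiable by blast
  ultimately have "mink (vector_derivative a (at t)) (f t - a t) = - s * r t * deriv r t"
    by (intro envelope_center_velocity[OF env I]) (simp add: vector_derivative_works)
  then have "r t * (beta a \<mu> t * mink (\<mu> t) (v t)) = r t * (- s * deriv r t)"
    by (simp add: f frontal_frame_velocity[OF frontal I(2)] mink.scaleR_left mink.scaleR_right
        algebra_simps)
  then show ?thesis using r(2) by (metis less_irrefl mult_left_cancel)
qed

lemma envelope_direction_continuous:
  assumes env: "is_envelope I a s r f" and I: "open I"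
    and smooth: "smooth_on I a" "smooth_on I r" and r_pos: "\<forall>t\<in>I. r t > 0"
    and f: "\<forall>t\<in>I. f t = a t + r t *\<^sub>R v t"
  shows "continuous_on I v"
proof -
  have "continuous_on I a" "continuous_on I f" "continuous_on I r"
    using env smooth smooth_on_imp_continuous_on[OF _ I] unfolding is_envelope_def by auto
  moreover have "v t = (1 / r t) *\<^sub>R (f t - a t)" if "t \<in> I" for t
    using f r_pos that by auto
  ultimately show ?thesis
    using r_pos by (auto intro!: continuous_intros cong: continuous_on_cong)
qed

theorem theorem2:
  fixes I :: "real set"
    and a \<nu> \<mu> f \<nu>t :: "real \<Rightarrow> real \<times> real"
    and r :: "real \<Rightarrow> real"
  assumes I: "open_interval I"
    and frontal: "spacelike_frontal_frame I a \<nu> \<mu> \<or> timelike_frontal_frame I a \<nu> \<mu>"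
    and r_smooth: "smooth_on I r"
    and r_pos: "\<forall>t\<in>I. r t > 0"
    and env: "(is_envelope I a 1 r f \<and> (\<forall>t\<in>I. \<nu>t t \<in> S11)) \<or>
              (is_envelope I a (-1) r f \<and> (\<forall>t\<in>I. \<nu>t t \<in> H1))"
    and f_repr: "\<forall>t\<in>I. f t = a t + r t *\<^sub>R \<nu>t t"
  shows
    "((\<forall>t\<in>I. eps (\<nu>t t) * eps (\<mu> t) = 1) \<longrightarrow>
       (\<exists>\<theta> :: real \<Rightarrow> real.
          (\<forall>t\<in>I. (\<nu>t t = cosh (\<theta> t) *\<^sub>R \<mu> t + sinh (\<theta> t) *\<^sub>R \<nu> t \<or>
                   \<nu>t t = cosh (\<theta> t) *\<^sub>R \<mu> t - sinh (\<theta> t) *\<^sub>R \<nu> t) \<and>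
                  deriv r t + beta a \<mu> t * cosh (\<theta> t) = 0) \<or>
          (\<forall>t\<in>I. (\<nu>t t = - cosh (\<theta> t) *\<^sub>R \<mu> t + sinh (\<theta> t) *\<^sub>R \<nu> t \<or>
                   \<nu>t t = - cosh (\<theta> t) *\<^sub>R \<mu> t - sinh (\<theta> t) *\<^sub>R \<nu> t) \<and>
                  deriv r t - beta a \<mu> t * cosh (\<theta> t) = 0))) \<and>
     ((\<forall>t\<in>I. eps (\<nu>t t) * eps (\<mu> t) = -1) \<longrightarrow>
       (\<exists>\<theta> :: real \<Rightarrow> real.
          \<forall>t\<in>I. (\<nu>t t = sinh (\<theta> t) *\<^sub>R \<mu> t + cosh (\<theta> t) *\<^sub>R \<nu> t \<or>
                  \<nu>t t = sinh (\<theta> t) *\<^sub>R \<mu> t - cosh (\<theta> t) *\<^sub>R \<nu> t) \<and>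
                 deriv r t - beta a \<mu> t * sinh (\<theta> t) = 0))"
proof -
  have open_I: "open I" and conn: "connected I" and "I \<noteq> {}"
    using I by (auto simp: open_interval_def is_interval_connected)
  then obtain t0 where "t0 \<in> I" by blast
  obtain e where e: "e = 1 \<or> e = -1" and frame: "\<forall>t\<in>I. pseudo_orthonormal e (\<mu> t) (\<nu> t)"
    using frontal_frame_pseudo_orthonormal[OF frontal] by blast
  obtain s where s: "s = 1 \<or> s = -1" and env_s: "is_envelope I a s r f"
    and unit: "\<forall>t\<in>I. mink (\<nu>t t) (\<nu>t t) = s"
    using env unfolding S11_def H1_def by auto
  have "eps (\<mu> t0) = e"
    using frame \<open>t0 \<in> I\<close> pseudo_orthonormal_eps by blast
  moreover have "eps (\<nu>t t0) = s"
    using unit s \<open>t0 \<in> I\<close> by (auto simp: eps_def)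
  ultimately have eps: "eps (\<nu>t t0) * eps (\<mu> t0) = s * e" by simp
  have radius: "\<forall>t\<in>I. beta a \<mu> t * mink (\<mu> t) (\<nu>t t) = - s * deriv r t"
    using frontal_envelope_radius[OF frontal env_s open_I _ r_smooth] r_pos f_repr by blast
  have smooth: "smooth_on I a" "smooth_on I \<mu>"
    using frontal unfolding spacelike_frontal_frame_def timelike_frontal_frame_def by auto
  have cont: "continuous_on I \<nu>t"
    using envelope_direction_continuous[OF env_s open_I smooth(1) r_smooth r_pos f_repr] .
  have cont_\<mu>: "continuous_on I \<mu>"
    using smooth_on_imp_continuous_on[OF smooth(2) open_I] .
  have "s = e \<or> s = - e" using e s by auto
  then show ?thesis
  proof
    assume "s = e"
    then have "eps (\<nu>t t0) * eps (\<mu> t0) \<noteq> -1" using eps e by auto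
    then show ?thesis
      using hyperbolic_angle_same_causal_character[OF conn cont cont_\<mu> frame, of "beta a \<mu>" "deriv r"]
        unit radius \<open>s = e\<close> \<open>t0 \<in> I\<close> by fastforce
  next
    assume "s = - e"
    then have "eps (\<nu>t t0) * eps (\<mu> t0) \<noteq> 1" using eps e by auto
    then show ?thesis
      using hyperbolic_angle_opposite_causal_character[OF frame, of \<nu>t "beta a \<mu>" "deriv r"]
        unit radius \<open>s = - e\<close> \<open>t0 \<in> I\<close> by auto
  qed
qed

end
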